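(* Let $\mathcal P_1,\dots,\mathcal P_n$ be nonempty sets of probability measures on $(\Omega,\mathcal F)$, $\Lambda_i\in\mathcal H_I$, and suppose $\overline{\mathbb Q}_i=\sup_{\mathbb Q\in\mathcal P_i}\mathbb Q$ (setwise supremum) are continuous capacities. Then for every $X\in\mathcal X$, $$\mathop{\square}_{i=1}^n\sup_{\mathbb Q\in\mathcal P_i}\Lambda_i\mathrm{VaR}^{\mathbb Q}(X)=\inf\{x\in\mathbb R:\{X>x\}\in\mathcal A^{\mathbf\Lambda,(\overline{\mathbb Q}_1,\dots,\overline{\mathbb Q}_n)}_x\},$$ and this functional is of the form $\Lambda\mathrm{VaR}^w$ for some $\Lambda\in\mathcal H_I^*$ and capacity $w$. If the infimum on the right is attained at $x^*$, an optimal allocation is $X_i=(X-x^* )\mathds 1_{A_i^*}+y_i^*$ with $\sum_iy_i^*=x^*$, $(A_i^* )\in\Pi_n(\Omega)$ and $\overline{\mathbb Q}_i(\{X>x^*\}\cap A_i^* )\le\Lambda_i(y_i^* )$.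
   Context: $\mathcal X$: set of real-valued random variables containing constants and closed under sums, differences and multiplication by indicators. Capacity: monotone $w:\mathcal F\to[0,1]$ with $w(\emptyset)=0$, $w(\Omega)=1$; continuous if $w(A_k)\to0$ whenever $A_k\downarrow\emptyset$. $\Lambda\mathrm{VaR}^w(X)=\inf\{x\in\mathbb R:w(X>x)\le\Lambda(x)\}$. $\mathcal H_I$: increasing functions $\mathbb R\to(0,1)$; $\mathcal H_I^*$: increasing functions $\mathbb R\to(0,1]$. $\mathcal A^{\mathbf\Lambda,\mathbf w}_x=\{\bigcup_iA_i: w_i(A_i)\le\Lambda_i(y_i)\ \forall i\text{ for some }(y_i)\text{ with }\sum_iy_i=x\}$. Inf-convolution $\mathop{\square}_i\rho_i(X)=\inf\{\sum_i\rho_i(X_i):X_i\in\mathcal X,\sum_iX_i=X\}$. $\Pi_n(\Omega)$: measurable partitions of $\Omega$ into $n$ sets. *)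

theory Defs
  imports "HOL-Probability.Probability"
begin

definition rv_space :: "'a measure \<Rightarrow> ('a \<Rightarrow> real) set \<Rightarrow> bool" where
  "rv_space M XX \<longleftrightarrow> XX \<subseteq> borel_measurable M
     \<and> (\<forall>c::real. (\<lambda>_. c) \<in> XX)
     \<and> (\<forall>X\<in>XX. \<forall>Y\<in>XX. (\<lambda>\<omega>. X \<omega> + Y \<omega>) \<in> XX \<and> (\<lambda>\<omega>. X \<omega> - Y \<omega>) \<in> XX)
     \<and> (\<forall>X\<in>XX. \<forall>A\<in>sets M. (\<lambda>\<omega>. X \<omega> * indicator A \<omega>) \<in> XX)"

definition capacity :: "'a measure \<Rightarrow> ('a set \<Rightarrow> real) \<Rightarrow> bool" where
  "capacity M w \<longleftrightarrow> (\<forall>A\<in>sets M. 0 \<le> w A \<and> w A \<le> 1)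
     \<and> (\<forall>A\<in>sets M. \<forall>B\<in>sets M. A \<subseteq> B \<longrightarrow> w A \<le> w B)
     \<and> w {} = 0 \<and> w (space M) = 1"

definition continuous_capacity :: "'a measure \<Rightarrow> ('a set \<Rightarrow> real) \<Rightarrow> bool" where
  "continuous_capacity M w \<longleftrightarrow> capacity M w
     \<and> (\<forall>A::nat \<Rightarrow> 'a set. (\<forall>k. A k \<in> sets M) \<longrightarrow> decseq A \<longrightarrow> (\<Inter>k. A k) = {}
            \<longrightarrow> (\<lambda>k. w (A k)) \<longlonglongrightarrow> 0)"

definition HI :: "(real \<Rightarrow> real) \<Rightarrow> bool" where
  "HI L \<longleftrightarrow> mono L \<and> (\<forall>x. 0 < L x \<and> L x < 1)"

definition HI_star :: "(real \<Rightarrow> real) \<Rightarrow> bool" where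
  "HI_star L \<longleftrightarrow> mono L \<and> (\<forall>x. 0 < L x \<and> L x \<le> 1)"

definition LVaR :: "'a measure \<Rightarrow> (real \<Rightarrow> real) \<Rightarrow> ('a set \<Rightarrow> real) \<Rightarrow> ('a \<Rightarrow> real) \<Rightarrow> ereal" where
  "LVaR M L w X = Inf {ereal x | x. w {\<omega>\<in>space M. X \<omega> > x} \<le> L x}"

definition upper_prob :: "'a measure set \<Rightarrow> 'a set \<Rightarrow> real" where
  "upper_prob P A = (SUP Q\<in>P. measure Q A)"

definition inf_conv :: "'a measure \<Rightarrow> ('a \<Rightarrow> real) set \<Rightarrow> nat \<Rightarrow> (nat \<Rightarrow> ('a \<Rightarrow> real) \<Rightarrow> ereal)
    \<Rightarrow> ('a \<Rightarrow> real) \<Rightarrow> ereal" where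
  "inf_conv M XX n \<rho> X = Inf {(\<Sum>i<n. \<rho> i (Xs i)) | Xs.
      (\<forall>i<n. Xs i \<in> XX) \<and> (\<forall>\<omega>\<in>space M. (\<Sum>i<n. Xs i \<omega>) = X \<omega>)}"

definition A_set :: "'a measure \<Rightarrow> nat \<Rightarrow> (nat \<Rightarrow> real \<Rightarrow> real) \<Rightarrow> (nat \<Rightarrow> 'a set \<Rightarrow> real)
    \<Rightarrow> real \<Rightarrow> 'a set set" where
  "A_set M n L w x = {(\<Union>i<n. A i) | A. (\<forall>i<n. A i \<in> sets M) \<and>
      (\<exists>y::nat \<Rightarrow> real. (\<Sum>i<n. y i) = x \<and> (\<forall>i<n. w i (A i) \<le> L i (y i)))}"

definition partition_n :: "'a measure \<Rightarrow> nat \<Rightarrow> (nat \<Rightarrow> 'a set) \<Rightarrow> bool" where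
  "partition_n M n A \<longleftrightarrow> (\<forall>i<n. A i \<in> sets M)
     \<and> (\<forall>i<n. \<forall>j<n. i \<noteq> j \<longrightarrow> A i \<inter> A j = {}) \<and> (\<Union>i<n. A i) = space M"

end

theory Submission
  imports Defs
begin

text \<open>
  If \<open>X = \<Sum>\<^sub>i X\<^sub>i\<close> and
  \<open>\<Lambda>\<^sub>iVaR(X\<^sub>i) < c\<^sub>i\<close>, then \<open>w\<^sub>i{X\<^sub>i > c\<^sub>i} \<le> \<Lambda>\<^sub>i(c\<^sub>i)\<close>, and \<open>{X > \<Sum>\<^sub>i c\<^sub>i}\<close> is covered
  by the sets \<open>{X\<^sub>i > c\<^sub>i}\<close>, so it lies in \<open>\<A>\<^sub>x\<close> for \<open>x = \<Sum>\<^sub>i c\<^sub>i\<close>. Conversely, a cover of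
  \<open>{X > x}\<close> witnessing membership in \<open>\<A>\<^sub>x\<close> refines to a partition \<open>(A\<^sub>i)\<close>, and the allocation
  \<open>X\<^sub>i = (X - x) \<cdot> indicator A\<^sub>i + y\<^sub>i\<close> has \<open>{X\<^sub>i > y\<^sub>i} = {X > x} \<inter> A\<^sub>i\<close>, hence \<open>\<Lambda>\<^sub>iVaR(X\<^sub>i) \<le> y\<^sub>i\<close>.
  The robust \<open>\<Lambda>\<^sub>i\<close>-VaR over \<open>\<P>\<^sub>i\<close> is the \<open>\<Lambda>\<^sub>i\<close>-VaR of the upper probability, which reduces
  everything to capacities.

  The family \<open>\<A>\<^sub>x\<close> increases with \<open>x\<close>, is closed under measurable subsets and contains \<open>\<emptyset>\<close>.
  Every such family defines a \<open>\<Lambda>\<close>-VaR: squashing the level \<open>t(A) = inf {x. A \<in> \<A>\<^sub>x}\<close> into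
  \<open>[0, 1]\<close> gives a capacity \<open>w\<close> and a profile \<open>\<Lambda>\<close> with \<open>w(A) \<le> \<Lambda>(x)\<close> iff \<open>t(A) \<le> x\<close>.
\<close>

section \<open>Extended-real sums\<close>

lemma ereal_add_less_split:
  fixes x y :: ereal
  assumes "x + y < ereal b" "x < \<infinity>" "y < \<infinity>"
  obtains b1 b2 where "x < ereal b1" "y < ereal b2" "b1 + b2 \<le> b"
proof (cases x; cases y)
  fix a d assume "x = ereal a" "y = ereal d"
  with assms show thesis
    by (intro that[of "a + (b - a - d) / 2" "d + (b - a - d) / 2"]) auto
next
  fix a assume "x = ereal a" "y = -\<infinity>"
  then show thesis by (intro that[of "a + 1" "b - a - 1"]) auto
next
  fix d assume "x = -\<infinity>" "y = ereal d"
  then show thesis by (intro that[of "b - d - 1" "d + 1"]) auto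
next
  assume "x = -\<infinity>" "y = -\<infinity>"
  then show thesis by (intro that[of b 0]) auto
qed (use assms in auto)

lemma ereal_sum_less_split:
  fixes r :: "'i \<Rightarrow> ereal"
  assumes "finite I" "\<forall>i\<in>I. r i < \<infinity>" "sum r I < ereal b"
  shows "\<exists>c. (\<forall>i\<in>I. r i < ereal (c i)) \<and> (\<Sum>i\<in>I. c i) < b"
  using assms
proof (induction I arbitrary: b rule: finite_induct)
  case empty
  then show ?case by (simp add: zero_ereal_def)
next
  case (insert j I)
  have "sum r I < \<infinity>"
    using insert by (simp add: sum_Pinfty less_top)
  moreover have "r j + sum r I < ereal b"
    using insert by simp
  ultimately obtain b1 b2 where b: "r j < ereal b1" "sum r I < ereal b2" "b1 + b2 \<le> b"
    using ereal_add_less_split insert.prems(1) by (metis insertI1)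
  obtain c where c: "\<forall>i\<in>I. r i < ereal (c i)" "(\<Sum>i\<in>I. c i) < b2"
    using insert.IH[OF _ b(2)] insert.prems(1) by blast
  have "(\<Sum>i\<in>I. (c(j := b1)) i) = (\<Sum>i\<in>I. c i)"
    using insert.hyps(2) by (intro sum.cong) auto
  then have "(\<Sum>i\<in>insert j I. (c(j := b1)) i) < b"
    using insert.hyps b(3) c(2) by simp
  moreover have "\<forall>i\<in>insert j I. r i < ereal ((c(j := b1)) i)"
    using b(1) c(1) insert.hyps(2) by auto
  ultimately show ?case by blast
qed

lemma ereal_le_sum_of_real_bounds:
  fixes r :: "'i \<Rightarrow> ereal"
  assumes "finite I" and bound: "\<And>c. \<forall>i\<in>I. r i < ereal (c i) \<Longrightarrow> a \<le> ereal (\<Sum>i\<in>I. c i)"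
  shows "a \<le> (\<Sum>i\<in>I. r i)"
proof (rule ccontr)
  assume "\<not> a \<le> sum r I"
  then have "sum r I < a" by (simp add: not_le)
  then obtain b where b: "sum r I < ereal b" "ereal b < a"
    using ereal_dense2 by blast
  have "\<forall>i\<in>I. r i < \<infinity>"
  proof
    fix i assume "i \<in> I"
    then have "r i \<noteq> \<infinity>"
      using assms(1) b(1) sum_Pinfty[of r I] by auto
    then show "r i < \<infinity>" by (simp add: less_top)
  qed
  then obtain c where c: "\<forall>i\<in>I. r i < ereal (c i)" "(\<Sum>i\<in>I. c i) < b"
    using ereal_sum_less_split[OF assms(1) _ b(1)] by blast
  have "a \<le> ereal (\<Sum>i\<in>I. c i)" by (rule bound[OF c(1)])
  also have "\<dots> < ereal b" using c(2) by simp
  also have "\<dots> < a" by (fact b(2))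
  finally have "a < a" .
  then show False by simp
qed

section \<open>Capacities, upper probabilities and \<open>\<Lambda>\<close>-VaR\<close>

lemma capacity_mono:
  "capacity M w \<Longrightarrow> A \<in> sets M \<Longrightarrow> B \<in> sets M \<Longrightarrow> A \<subseteq> B \<Longrightarrow> w A \<le> w B"
  unfolding capacity_def by blast

lemma capacity_empty: "capacity M w \<Longrightarrow> w {} = 0"
  unfolding capacity_def by blast

lemma capacity_space_nonempty: "capacity M w \<Longrightarrow> space M \<noteq> {}"
  unfolding capacity_def by auto

lemma capacity_measure:
  assumes "prob_space Q" "sets Q = sets M"
  shows "capacity M (measure Q)"
proof -
  interpret Q: prob_space Q by fact
  have "space M = space Q"
    using assms(2) by (metis sets_eq_imp_space_eq)
  then show ?thesis
    unfolding capacity_def using assms(2) by (auto simp: Q.prob_space intro: Q.finite_measure_mono)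
qed

lemma measure_le_upper_prob:
  assumes "\<forall>Q\<in>P. prob_space Q" "Q \<in> P"
  shows "measure Q A \<le> upper_prob P A"
  unfolding upper_prob_def
  using assms by (intro cSUP_upper bdd_aboveI2[where M=1]) (auto intro: prob_space.prob_le_1)

lemma upper_prob_le:
  "P \<noteq> {} \<Longrightarrow> (\<And>Q. Q \<in> P \<Longrightarrow> measure Q A \<le> c) \<Longrightarrow> upper_prob P A \<le> c"
  unfolding upper_prob_def by (rule cSUP_least)

lemma superlevel_set_measurable:
  fixes X :: "'a \<Rightarrow> real"
  assumes "X \<in> borel_measurable M"
  shows "{\<omega>\<in>space M. c < X \<omega>} \<in> sets M"
  using assms unfolding borel_measurable_iff_greater by simp

lemma LVaR_le: "w {\<omega>\<in>space M. y < X \<omega>} \<le> L y \<Longrightarrow> LVaR M L w X \<le> ereal y"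
  unfolding LVaR_def by (rule Inf_lower) blast

lemma LVaR_lessD:
  assumes "capacity M w" "mono L" "X \<in> borel_measurable M" "LVaR M L w X < ereal c"
  shows "w {\<omega>\<in>space M. c < X \<omega>} \<le> L c"
proof -
  obtain x where x: "w {\<omega>\<in>space M. x < X \<omega>} \<le> L x" "x < c"
    using assms(4) unfolding LVaR_def Inf_less_iff by auto
  have "w {\<omega>\<in>space M. c < X \<omega>} \<le> w {\<omega>\<in>space M. x < X \<omega>}"
    using x(2) assms(1,3) by (intro capacity_mono superlevel_set_measurable) auto
  also have "\<dots> \<le> L x" by (fact x(1))
  also have "\<dots> \<le> L c" using x(2) assms(2) by (simp add: mono_def)
  finally show ?thesis .
qed

lemma SUP_LVaR_eq_LVaR_upper_prob:
  assumes "P \<noteq> {}" "\<forall>Q\<in>P. prob_space Q \<and> sets Q = sets M" "mono L" "X \<in> borel_measurable M"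
  shows "(SUP Q\<in>P. LVaR M L (measure Q) X) = LVaR M L (upper_prob P) X"
proof (rule antisym)
  show "(SUP Q\<in>P. LVaR M L (measure Q) X) \<le> LVaR M L (upper_prob P) X"
  proof (rule SUP_least)
    fix Q assume Q: "Q \<in> P"
    show "LVaR M L (measure Q) X \<le> LVaR M L (upper_prob P) X"
      unfolding LVaR_def
    proof (rule Inf_superset_mono, clarify)
      fix x assume "upper_prob P {\<omega>\<in>space M. x < X \<omega>} \<le> L x"
      moreover have "measure Q {\<omega>\<in>space M. x < X \<omega>} \<le> upper_prob P {\<omega>\<in>space M. x < X \<omega>}"
        using assms(2) Q by (simp add: measure_le_upper_prob)
      ultimately show "\<exists>x'. ereal x = ereal x' \<and> measure Q {\<omega>\<in>space M. x' < X \<omega>} \<le> L x'"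
        by force
    qed
  qed
  show "LVaR M L (upper_prob P) X \<le> (SUP Q\<in>P. LVaR M L (measure Q) X)"
  proof (rule dense_ge)
    fix c assume c: "(SUP Q\<in>P. LVaR M L (measure Q) X) < c"
    show "LVaR M L (upper_prob P) X \<le> c"
    proof (cases c)
      case (real c')
      have "upper_prob P {\<omega>\<in>space M. c' < X \<omega>} \<le> L c'"
      proof (rule upper_prob_le[OF assms(1)])
        fix Q assume Q: "Q \<in> P"
        then have "LVaR M L (measure Q) X < ereal c'"
          using c real by (auto dest: SUP_lessD)
        then show "measure Q {\<omega>\<in>space M. c' < X \<omega>} \<le> L c'"
          using assms(2) Q by (intro LVaR_lessD[OF capacity_measure assms(3,4)]) auto
      qed
      then show ?thesis using real by (simp add: LVaR_le)
    qed (use c in auto)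
  qed
qed

section \<open>\<open>\<Lambda>\<close>-VaR of an acceptance family\<close>

text \<open>Any strictly increasing map of the extended reals onto \<open>[0, 1]\<close> that sends the reals
  into \<open>(0, 1)\<close> would do.\<close>

definition squash :: "ereal \<Rightarrow> real" where
  "squash e = (case e of ereal r \<Rightarrow> 1/2 + arctan r / pi | PInfty \<Rightarrow> 1 | MInfty \<Rightarrow> 0)"

lemma squash_infinity [simp]: "squash \<infinity> = 1" "squash (-\<infinity>) = 0"
  by (simp only: squash_def ereal.case flip: PInfty_eq_infinity,
      simp only: squash_def ereal.case flip: MInfty_eq_minfinity)

lemma squash_real_bounds: "0 < squash (ereal r) \<and> squash (ereal r) < 1"
proof -
  have "-(pi/2) < arctan r" "arctan r < pi/2"
    using arctan_bounded by auto
  then have "-(1/2) < arctan r / pi" "arctan r / pi < 1/2"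
    using pi_gt_zero by (simp_all add: divide_simps)
  moreover have "squash (ereal r) = 1/2 + arctan r / pi"
    by (simp add: squash_def)
  ultimately show ?thesis by linarith
qed

lemma squash_bounds: "0 \<le> squash e \<and> squash e \<le> 1"
  using squash_real_bounds by (cases e) (auto simp: less_imp_le)

lemma strict_mono_squash: "strict_mono squash"
proof (rule strict_monoI)
  fix a b :: ereal assume "a < b"
  then show "squash a < squash b"
    using squash_real_bounds pi_gt_zero
    by (cases a; cases b) (auto simp: squash_def divide_strict_right_mono arctan_less_iff)
qed

lemma squash_le_iff: "squash a \<le> squash b \<longleftrightarrow> a \<le> b"
  using strict_mono_squash by (rule strict_mono_less_eq)

locale acceptance_family =
  fixes M :: "'a measure" and \<A> :: "real \<Rightarrow> 'a set set"
  assumes space_nonempty: "space M \<noteq> {}"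
    and mono_acceptance: "mono \<A>"
    and hereditary: "\<And>A B x. A \<in> \<A> x \<Longrightarrow> B \<in> sets M \<Longrightarrow> B \<subseteq> A \<Longrightarrow> B \<in> \<A> x"
    and empty_accepted: "\<And>x. {} \<in> \<A> x"
begin

definition level :: "'a set \<Rightarrow> ereal" where
  "level A = Inf {ereal x | x. A \<in> \<A> x}"

definition level_capacity :: "'a set \<Rightarrow> real" where
  "level_capacity A = (if A = space M then 1 else squash (level A))"

text \<open>A capacity must give \<open>\<Omega>\<close> weight \<open>1\<close>, so the profile reaches \<open>1\<close> exactly where \<open>\<Omega>\<close>
  itself becomes acceptable.\<close>

definition level_profile :: "real \<Rightarrow> real" where
  "level_profile x = (if level (space M) \<le> ereal x then 1 else squash (ereal x))"

lemma level_le: "A \<in> \<A> x \<Longrightarrow> level A \<le> ereal x"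
  unfolding level_def by (rule Inf_lower) blast

lemma accepted_if_level_less:
  assumes "level A < ereal x"
  shows "A \<in> \<A> x"
proof -
  obtain y where "A \<in> \<A> y" "y < x"
    using assms unfolding level_def Inf_less_iff by auto
  then show ?thesis
    using mono_acceptance by (meson less_imp_le monoD subsetD)
qed

lemma level_mono: "B \<in> sets M \<Longrightarrow> B \<subseteq> A \<Longrightarrow> level B \<le> level A"
  unfolding level_def by (rule Inf_superset_mono) (auto intro: hereditary)

lemma level_empty: "level {} = -\<infinity>"
  by (rule ereal_bot) (use level_le empty_accepted in blast)

lemma capacity_level_capacity: "capacity M level_capacity"
  unfolding capacity_def
proof (intro conjI ballI impI)
  fix A assume "A \<in> sets M"
  show "0 \<le> level_capacity A" "level_capacity A \<le> 1"
    unfolding level_capacity_def using squash_bounds by auto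
next
  fix A B assume AB: "A \<in> sets M" "B \<in> sets M" "A \<subseteq> B"
  show "level_capacity A \<le> level_capacity B"
  proof (cases "B = space M")
    case True
    then show ?thesis unfolding level_capacity_def using squash_bounds by auto
  next
    case False
    then have "A \<noteq> space M"
      using AB sets.sets_into_space by blast
    then show ?thesis
      unfolding level_capacity_def using False AB level_mono squash_le_iff by auto
  qed
next
  show "level_capacity {} = 0"
    unfolding level_capacity_def using space_nonempty level_empty by auto
  show "level_capacity (space M) = 1"
    unfolding level_capacity_def by simp
qed

lemma HI_star_level_profile: "HI_star level_profile"
  unfolding HI_star_def
proof
  show "mono level_profile"
  proof (rule monoI)
    fix a b :: real assume "a \<le> b"
    then have "level (space M) \<le> ereal a \<Longrightarrow> level (space M) \<le> ereal b"
      using order_trans[of "level (space M)" "ereal a" "ereal b"] by simp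
    then show "level_profile a \<le> level_profile b"
      unfolding level_profile_def using \<open>a \<le> b\<close> squash_bounds squash_le_iff by auto
  qed
  show "\<forall>x. 0 < level_profile x \<and> level_profile x \<le> 1"
    unfolding level_profile_def using squash_real_bounds by (auto simp: less_imp_le)
qed

lemma level_capacity_le_profile_iff:
  assumes "A \<in> sets M"
  shows "level_capacity A \<le> level_profile x \<longleftrightarrow> level A \<le> ereal x"
proof (cases "A = space M")
  case True
  then show ?thesis
    unfolding level_capacity_def level_profile_def using squash_real_bounds[of x] by auto
next
  case False
  show ?thesis
  proof (cases "level (space M) \<le> ereal x")
    case True
    have "level A \<le> ereal x"
      using order_trans[OF level_mono[OF assms sets.sets_into_space[OF assms]] True] .
    then show ?thesis
      unfolding level_capacity_def level_profile_def using True squash_bounds by simp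
  next
    case False
    then show ?thesis
      unfolding level_capacity_def level_profile_def using \<open>A \<noteq> space M\<close> squash_le_iff by simp
  qed
qed

lemma LVaR_level:
  fixes X :: "'a \<Rightarrow> real"
  assumes "X \<in> borel_measurable M"
  shows "LVaR M level_profile level_capacity X = Inf {ereal x | x. {\<omega>\<in>space M. x < X \<omega>} \<in> \<A> x}"
    (is "_ = Inf {ereal x | x. ?E x \<in> \<A> x}")
proof -
  have "LVaR M level_profile level_capacity X = Inf {ereal x | x. level (?E x) \<le> ereal x}"
    unfolding LVaR_def
    using level_capacity_le_profile_iff[OF superlevel_set_measurable[OF assms]] by simp
  also have "\<dots> = Inf {ereal x | x. ?E x \<in> \<A> x}"
  proof (rule antisym)
    show "Inf {ereal x | x. level (?E x) \<le> ereal x} \<le> Inf {ereal x | x. ?E x \<in> \<A> x}"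
      using level_le by (intro Inf_superset_mono) blast
    show "Inf {ereal x | x. ?E x \<in> \<A> x} \<le> Inf {ereal x | x. level (?E x) \<le> ereal x}"
    proof (rule Inf_greatest, clarify)
      fix x assume x: "level (?E x) \<le> ereal x"
      show "Inf {ereal x | x. ?E x \<in> \<A> x} \<le> ereal x"
      proof (rule ereal_le_epsilon2)
        fix e :: real assume "0 < e"
        have "level (?E (x + e)) \<le> level (?E x)"
          using \<open>0 < e\<close> superlevel_set_measurable[OF assms] by (intro level_mono) auto
        also have "\<dots> < ereal (x + e)"
          using x \<open>0 < e\<close> by (simp add: le_less_trans)
        finally have "?E (x + e) \<in> \<A> (x + e)"
          by (rule accepted_if_level_less)
        then show "Inf {ereal x | x. ?E x \<in> \<A> x} \<le> ereal x + ereal e"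
          by (intro Inf_lower) auto
      qed
    qed
  qed
  finally show ?thesis .
qed

end

section \<open>Inf-convolution of \<open>\<Lambda>\<close>-VaRs of capacities\<close>

lemma inf_conv_cong:
  assumes "\<And>i X. i < n \<Longrightarrow> X \<in> XX \<Longrightarrow> \<rho> i X = \<rho>' i X"
  shows "inf_conv M XX n \<rho> = inf_conv M XX n \<rho>'"
proof
  fix X
  have sum_eq: "(\<Sum>i<n. \<rho> i (Xs i)) = (\<Sum>i<n. \<rho>' i (Xs i))" if "\<forall>i<n. Xs i \<in> XX" for Xs
    using assms that by (intro sum.cong) auto
  show "inf_conv M XX n \<rho> X = inf_conv M XX n \<rho>' X"
    unfolding inf_conv_def
  proof (rule arg_cong[where f = Inf], rule Collect_cong)
    fix v
    show "(\<exists>Xs. v = (\<Sum>i<n. \<rho> i (Xs i)) \<and> (\<forall>i<n. Xs i \<in> XX) \<and> (\<forall>\<omega>\<in>space M. (\<Sum>i<n. Xs i \<omega>) = X \<omega>))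
      \<longleftrightarrow> (\<exists>Xs. v = (\<Sum>i<n. \<rho>' i (Xs i)) \<and> (\<forall>i<n. Xs i \<in> XX) \<and> (\<forall>\<omega>\<in>space M. (\<Sum>i<n. Xs i \<omega>) = X \<omega>))"
      using sum_eq by metis
  qed
qed

lemma partition_n_sum_indicator:
  assumes "partition_n M n B" "\<omega> \<in> space M"
  shows "(\<Sum>i<n. c * indicator (B i) \<omega>) = (c :: real)"
proof -
  obtain j where "j < n" "\<omega> \<in> B j"
    using assms unfolding partition_n_def by blast
  moreover have "disjoint_family_on B {..<n}"
    using assms(1) unfolding partition_n_def disjoint_family_on_def by blast
  ultimately show ?thesis
    by (intro sum_indicator_disjoint_family[where f = "\<lambda>_. c"]) auto
qed

lemma partition_n_refining_cover:
  assumes "0 < n" "\<forall>i<n. A i \<in> sets M" "E \<in> sets M" "E \<subseteq> (\<Union>i<n. A i)"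
  obtains B where "partition_n M n B" "\<forall>i<n. E \<inter> B i \<subseteq> A i"
proof
  define B where "B i = (E \<inter> disjointed A i) \<union> (if i = 0 then space M - E else {})" for i
  have "disjointed A i \<in> sets M" if "i < n" for i
  proof -
    have "(\<Union>j\<in>{0..<i}. A j) \<in> sets M"
      using assms(2) that by (intro sets.finite_UN) auto
    then show ?thesis
      unfolding disjointed_def using assms(2) that by auto
  qed
  then have "\<forall>i<n. B i \<in> sets M"
    unfolding B_def using assms(2,3) by auto
  moreover have "\<forall>i<n. \<forall>j<n. i \<noteq> j \<longrightarrow> B i \<inter> B j = {}"
    unfolding B_def using disjoint_family_disjointed[of A]
    unfolding disjoint_family_on_def by (auto simp del: disjointed_0)
  moreover have "(\<Union>i<n. B i) = space M"
  proof
    show "(\<Union>i<n. B i) \<subseteq> space M"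
      unfolding B_def using sets.sets_into_space[OF assms(3)] by (auto split: if_splits)
    have E_cover: "E \<subseteq> (\<Union>i<n. disjointed A i)"
      using assms(4) finite_UN_disjointed_eq[of A n] by (simp add: atLeast0LessThan)
    show "space M \<subseteq> (\<Union>i<n. B i)"
    proof
      fix x assume x: "x \<in> space M"
      show "x \<in> (\<Union>i<n. B i)"
      proof (cases "x \<in> E")
        case True
        then obtain i where "i < n" "x \<in> disjointed A i"
          using E_cover by blast
        then show ?thesis
          using True unfolding B_def by blast
      next
        case False
        then have "x \<in> B 0"
          using x unfolding B_def by simp
        then show ?thesis
          using assms(1) by blast
      qed
    qed
  qed
  ultimately show "partition_n M n B"
    unfolding partition_n_def by blast
  show "\<forall>i<n. E \<inter> B i \<subseteq> A i"
    unfolding B_def using disjointed_subset[of A] by auto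
qed

lemma rv_space_measurable: "rv_space M XX \<Longrightarrow> X \<in> XX \<Longrightarrow> X \<in> borel_measurable M"
  unfolding rv_space_def by blast

lemma rv_space_shifted_indicator:
  assumes XX: "rv_space M XX" and "X \<in> XX" "A \<in> sets M"
  shows "(\<lambda>\<omega>. (X \<omega> - x) * indicator A \<omega> + y) \<in> XX"
proof -
  have const: "(\<lambda>_. c) \<in> XX" for c
    using XX by (simp add: rv_space_def)
  have add: "(\<lambda>\<omega>. U \<omega> + V \<omega>) \<in> XX" and diff: "(\<lambda>\<omega>. U \<omega> - V \<omega>) \<in> XX"
    if "U \<in> XX" "V \<in> XX" for U V
    using XX that by (simp_all add: rv_space_def)
  have ind: "(\<lambda>\<omega>. U \<omega> * indicator A \<omega>) \<in> XX" if "U \<in> XX" for U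
    using XX that \<open>A \<in> sets M\<close> by (simp add: rv_space_def)
  show ?thesis
    using add[OF ind[OF diff[OF \<open>X \<in> XX\<close> const]] const] .
qed

lemma A_set_UN:
  assumes "\<forall>i<n. A i \<in> sets M" "\<forall>i<n. w i (A i) \<le> L i (y i)"
  shows "(\<Union>i<n. A i) \<in> A_set M n L w (\<Sum>i<n. y i)"
  unfolding A_set_def using assms by blast

lemma A_setE:
  assumes "E \<in> A_set M n L w x"
  obtains A y where "E = (\<Union>i<n. A i)" "\<forall>i<n. A i \<in> sets M"
    "(\<Sum>i<n. y i) = x" "\<forall>i<n. w i (A i) \<le> L i (y i)"
  using assms unfolding A_set_def by blast

locale capacity_LVaR =
  fixes M :: "'a measure" and XX :: "('a \<Rightarrow> real) set" and n :: nat
    and L :: "nat \<Rightarrow> real \<Rightarrow> real" and w :: "nat \<Rightarrow> 'a set \<Rightarrow> real"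
  assumes rv_space: "rv_space M XX"
    and n_pos: "0 < n"
    and HI_L: "\<And>i. i < n \<Longrightarrow> HI (L i)"
    and capacity_w: "\<And>i. i < n \<Longrightarrow> capacity M (w i)"
begin

abbreviation lvar :: "nat \<Rightarrow> ('a \<Rightarrow> real) \<Rightarrow> ereal" where
  "lvar i \<equiv> LVaR M (L i) (w i)"

definition A_risk :: "('a \<Rightarrow> real) \<Rightarrow> ereal" where
  "A_risk X = Inf {ereal x | x. {\<omega>\<in>space M. X \<omega> > x} \<in> A_set M n L w x}"

lemma mono_L: "i < n \<Longrightarrow> mono (L i)"
  using HI_L unfolding HI_def by blast

lemma A_set_mono:
  assumes "x \<le> x'"
  shows "A_set M n L w x \<subseteq> A_set M n L w x'"
proof
  fix E assume "E \<in> A_set M n L w x"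
  then obtain A y where A: "E = (\<Union>i<n. A i)" "\<forall>i<n. A i \<in> sets M"
    "(\<Sum>i<n. y i) = x" "\<forall>i<n. w i (A i) \<le> L i (y i)"
    by (rule A_setE)
  define y' where "y' = y(0 := y 0 + (x' - x))"
  have "(\<Sum>i<n. y' i) = (\<Sum>i<n. y i) + (x' - x)"
    using n_pos unfolding y'_def by (simp add: sum.remove[of "{..<n}" 0])
  moreover have "\<forall>i<n. w i (A i) \<le> L i (y' i)"
  proof (intro allI impI)
    fix i assume "i < n"
    have "L i (y i) \<le> L i (y' i)"
      using assms mono_L[OF \<open>i < n\<close>] unfolding y'_def by (simp add: monoD)
    then show "w i (A i) \<le> L i (y' i)"
      using A(4) \<open>i < n\<close> by force
  qed
  ultimately show "E \<in> A_set M n L w x'"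
    using A A_set_UN[of n A M w L y'] by simp
qed

lemma A_set_hereditary:
  assumes "E \<in> A_set M n L w x" "F \<in> sets M" "F \<subseteq> E"
  shows "F \<in> A_set M n L w x"
proof -
  obtain A y where A: "E = (\<Union>i<n. A i)" "\<forall>i<n. A i \<in> sets M"
    "(\<Sum>i<n. y i) = x" "\<forall>i<n. w i (A i) \<le> L i (y i)"
    using assms(1) by (rule A_setE)
  have "\<forall>i<n. A i \<inter> F \<in> sets M"
    using A(2) assms(2) by blast
  moreover have "\<forall>i<n. w i (A i \<inter> F) \<le> L i (y i)"
    using A(2,4) assms(2) capacity_mono[OF capacity_w] by (meson Int_lower1 order_trans sets.Int)
  moreover have "F = (\<Union>i<n. A i \<inter> F)"
    using A(1) assms(3) by blast
  ultimately show ?thesis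
    using A(3) A_set_UN[of n "\<lambda>i. A i \<inter> F" M w L y] by simp
qed

lemma empty_in_A_set: "{} \<in> A_set M n L w x"
proof -
  have "\<forall>i<n. w i {} \<le> L i (x / n)"
    using capacity_empty[OF capacity_w] HI_L unfolding HI_def by (simp add: less_imp_le)
  then show ?thesis
    using A_set_UN[of n "\<lambda>_. {}" M w L "\<lambda>_. x / n"] n_pos by simp
qed

sublocale acceptance: acceptance_family M "A_set M n L w"
proof
  show "space M \<noteq> {}"
    using capacity_space_nonempty[OF capacity_w[OF n_pos]] .
  show "mono (A_set M n L w)"
    using A_set_mono by (rule monoI)
qed (use A_set_hereditary empty_in_A_set in blast)+

lemma A_set_partition:
  assumes "X \<in> XX" "{\<omega>\<in>space M. X \<omega> > x} \<in> A_set M n L w x"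
  shows "\<exists>y B. (\<Sum>i<n. y i) = x \<and> partition_n M n B \<and>
    (\<forall>i<n. w i ({\<omega>\<in>space M. X \<omega> > x} \<inter> B i) \<le> L i (y i))"
proof -
  let ?E = "{\<omega>\<in>space M. X \<omega> > x}"
  obtain A y where A: "?E = (\<Union>i<n. A i)" "\<forall>i<n. A i \<in> sets M"
    "(\<Sum>i<n. y i) = x" "\<forall>i<n. w i (A i) \<le> L i (y i)"
    using assms(2) by (rule A_setE)
  have E: "?E \<in> sets M"
    using superlevel_set_measurable rv_space_measurable[OF rv_space assms(1)] .
  obtain B where B: "partition_n M n B" "\<forall>i<n. ?E \<inter> B i \<subseteq> A i"
    using partition_n_refining_cover[OF n_pos A(2) E] A(1) by blast
  have "\<forall>i<n. w i (?E \<inter> B i) \<le> L i (y i)"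
  proof (intro allI impI)
    fix i assume "i < n"
    have "B i \<in> sets M"
      using B(1) \<open>i < n\<close> unfolding partition_n_def by blast
    then have "w i (?E \<inter> B i) \<le> w i (A i)"
      using capacity_mono[OF capacity_w] B(2) A(2) E \<open>i < n\<close> by blast
    then show "w i (?E \<inter> B i) \<le> L i (y i)"
      using A(4) \<open>i < n\<close> by force
  qed
  then show ?thesis
    using A(3) B(1) by blast
qed

lemma shifted_indicator_allocation:
  assumes "X \<in> XX" "(\<Sum>i<n. y i) = x" "partition_n M n B"
    and w_le: "\<forall>i<n. w i ({\<omega>\<in>space M. X \<omega> > x} \<inter> B i) \<le> L i (y i)"
    and Xs_def: "Xs = (\<lambda>i \<omega>. (X \<omega> - x) * indicator (B i) \<omega> + y i)"
  shows "\<forall>i<n. Xs i \<in> XX" "\<forall>\<omega>\<in>space M. (\<Sum>i<n. Xs i \<omega>) = X \<omega>"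
    and "\<forall>i<n. lvar i (Xs i) \<le> ereal (y i)"
proof -
  show "\<forall>i<n. Xs i \<in> XX"
    using assms(3) rv_space_shifted_indicator[OF rv_space assms(1)]
    unfolding Xs_def partition_n_def by blast
  show "\<forall>\<omega>\<in>space M. (\<Sum>i<n. Xs i \<omega>) = X \<omega>"
  proof
    fix \<omega> assume "\<omega> \<in> space M"
    then have "(\<Sum>i<n. (X \<omega> - x) * indicator (B i) \<omega>) = X \<omega> - x"
      by (rule partition_n_sum_indicator[OF assms(3)])
    moreover have "(\<Sum>i<n. Xs i \<omega>) = (\<Sum>i<n. (X \<omega> - x) * indicator (B i) \<omega>) + (\<Sum>i<n. y i)"
      unfolding Xs_def by (rule sum.distrib)
    ultimately show "(\<Sum>i<n. Xs i \<omega>) = X \<omega>"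
      using assms(2) by linarith
  qed
  have "{\<omega>\<in>space M. y i < Xs i \<omega>} = {\<omega>\<in>space M. X \<omega> > x} \<inter> B i" for i
    unfolding Xs_def by (auto simp: indicator_def)
  then show "\<forall>i<n. lvar i (Xs i) \<le> ereal (y i)"
    using w_le by (simp add: LVaR_le)
qed

lemma inf_conv_le_level:
  assumes "X \<in> XX" "{\<omega>\<in>space M. X \<omega> > x} \<in> A_set M n L w x"
  shows "inf_conv M XX n lvar X \<le> ereal x"
proof -
  obtain y B where yB: "(\<Sum>i<n. y i) = x" "partition_n M n B"
    "\<forall>i<n. w i ({\<omega>\<in>space M. X \<omega> > x} \<inter> B i) \<le> L i (y i)"
    using A_set_partition[OF assms] by blast
  define Xs where "Xs = (\<lambda>i \<omega>. (X \<omega> - x) * indicator (B i) \<omega> + y i)"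
  note Xs = shifted_indicator_allocation[OF assms(1) yB Xs_def]
  have "inf_conv M XX n lvar X \<le> (\<Sum>i<n. lvar i (Xs i))"
    unfolding inf_conv_def using Xs(1,2) by (intro Inf_lower) blast
  also have "\<dots> \<le> (\<Sum>i<n. ereal (y i))"
    using Xs(3) by (intro sum_mono) simp
  also have "\<dots> = ereal x"
    using yB(1) by simp
  finally show ?thesis .
qed

lemma A_risk_le_allocation:
  assumes Xs: "\<forall>i<n. Xs i \<in> XX" "\<forall>\<omega>\<in>space M. (\<Sum>i<n. Xs i \<omega>) = X \<omega>" and "X \<in> XX"
  shows "A_risk X \<le> (\<Sum>i<n. lvar i (Xs i))"
proof (rule ereal_le_sum_of_real_bounds[OF finite_lessThan])
  fix c assume c: "\<forall>i\<in>{..<n}. lvar i (Xs i) < ereal (c i)"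
  define E where "E i = {\<omega>\<in>space M. c i < Xs i \<omega>}" for i
  have E_sets: "\<forall>i<n. E i \<in> sets M"
    unfolding E_def using Xs(1) rv_space_measurable[OF rv_space] superlevel_set_measurable by blast
  have "\<forall>i<n. w i (E i) \<le> L i (c i)"
    unfolding E_def using c Xs(1) rv_space_measurable[OF rv_space]
    by (auto intro: LVaR_lessD[OF capacity_w mono_L])
  then have "(\<Union>i<n. E i) \<in> A_set M n L w (\<Sum>i<n. c i)"
    using A_set_UN E_sets by blast
  moreover have "{\<omega>\<in>space M. (\<Sum>i<n. c i) < X \<omega>} \<in> sets M"
    using superlevel_set_measurable rv_space_measurable[OF rv_space \<open>X \<in> XX\<close>] .
  moreover have "{\<omega>\<in>space M. (\<Sum>i<n. c i) < X \<omega>} \<subseteq> (\<Union>i<n. E i)"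
  proof
    fix \<omega> assume \<omega>: "\<omega> \<in> {\<omega>\<in>space M. (\<Sum>i<n. c i) < X \<omega>}"
    show "\<omega> \<in> (\<Union>i<n. E i)"
    proof (rule ccontr)
      assume "\<omega> \<notin> (\<Union>i<n. E i)"
      then have "(\<Sum>i<n. Xs i \<omega>) \<le> (\<Sum>i<n. c i)"
        using \<omega> unfolding E_def by (intro sum_mono) (auto simp: not_less)
      then show False
        using \<omega> Xs(2) by auto
    qed
  qed
  ultimately have "{\<omega>\<in>space M. (\<Sum>i<n. c i) < X \<omega>} \<in> A_set M n L w (\<Sum>i<n. c i)"
    by (rule A_set_hereditary)
  then show "A_risk X \<le> ereal (\<Sum>i<n. c i)"
    unfolding A_risk_def by (intro Inf_lower) auto
qed

theorem inf_conv_eq_A_risk: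
  assumes "X \<in> XX"
  shows "inf_conv M XX n lvar X = A_risk X"
proof (rule antisym)
  show "inf_conv M XX n lvar X \<le> A_risk X"
    unfolding A_risk_def using inf_conv_le_level[OF assms] by (intro Inf_greatest) auto
  show "A_risk X \<le> inf_conv M XX n lvar X"
    unfolding inf_conv_def using A_risk_le_allocation assms by (intro Inf_greatest) auto
qed

theorem A_risk_is_LVaR:
  "\<exists>L' w'. HI_star L' \<and> capacity M w' \<and> (\<forall>X\<in>XX. A_risk X = LVaR M L' w' X)"
proof (intro exI conjI ballI)
  fix X assume "X \<in> XX"
  then show "A_risk X = LVaR M acceptance.level_profile acceptance.level_capacity X"
    unfolding A_risk_def
    using acceptance.LVaR_level[OF rv_space_measurable[OF rv_space]] by simp
qed (fact acceptance.HI_star_level_profile acceptance.capacity_level_capacity)+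

theorem optimal_allocation:
  assumes "X \<in> XX" "A_risk X = ereal x" "(\<Sum>i<n. y i) = x" "partition_n M n B"
    and "\<forall>i<n. w i ({\<omega>\<in>space M. X \<omega> > x} \<inter> B i) \<le> L i (y i)"
    and "Xs = (\<lambda>i \<omega>. (X \<omega> - x) * indicator (B i) \<omega> + y i)"
  shows "(\<forall>i<n. Xs i \<in> XX) \<and> (\<forall>\<omega>\<in>space M. (\<Sum>i<n. Xs i \<omega>) = X \<omega>)
    \<and> (\<Sum>i<n. lvar i (Xs i)) = inf_conv M XX n lvar X"
proof -
  note Xs = shifted_indicator_allocation[OF assms(1,3-6)]
  have "(\<Sum>i<n. lvar i (Xs i)) \<le> (\<Sum>i<n. ereal (y i))"
    using Xs(3) by (intro sum_mono) simp
  also have "\<dots> = inf_conv M XX n lvar X"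
    using assms(2,3) inf_conv_eq_A_risk[OF assms(1)] by simp
  finally have "(\<Sum>i<n. lvar i (Xs i)) \<le> inf_conv M XX n lvar X" .
  moreover have "inf_conv M XX n lvar X \<le> (\<Sum>i<n. lvar i (Xs i))"
    unfolding inf_conv_def using Xs(1,2) by (intro Inf_lower) blast
  ultimately show ?thesis
    using Xs(1,2) by simp
qed

end

theorem mainTheorem12:
  fixes M :: "'a measure" and XX :: "('a \<Rightarrow> real) set" and n :: nat
    and P :: "nat \<Rightarrow> 'a measure set" and L :: "nat \<Rightarrow> real \<Rightarrow> real"
  assumes XX: "rv_space M XX"
    and n: "0 < n"
    and P_ne: "\<forall>i<n. P i \<noteq> {}"
    and P_prob: "\<forall>i<n. \<forall>Q\<in>P i. prob_space Q \<and> sets Q = sets M"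
    and L: "\<forall>i<n. HI (L i)"
    and cont: "\<forall>i<n. continuous_capacity M (upper_prob (P i))"
  defines "\<rho> \<equiv> (\<lambda>i X. SUP Q\<in>P i. LVaR M (L i) (measure Q) X)"
    and "R \<equiv> (\<lambda>X. Inf {ereal x | x.
               {\<omega>\<in>space M. X \<omega> > x} \<in> A_set M n L (\<lambda>i. upper_prob (P i)) x})"
  shows "(\<forall>X\<in>XX. inf_conv M XX n \<rho> X = R X)
    \<and> (\<exists>L' w. HI_star L' \<and> capacity M w \<and> (\<forall>X\<in>XX. R X = LVaR M L' w X))
    \<and> (\<forall>X\<in>XX. \<forall>xs::real.
         {\<omega>\<in>space M. X \<omega> > xs} \<in> A_set M n L (\<lambda>i. upper_prob (P i)) xs \<and> R X = ereal xs \<longrightarrow>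
         (\<exists>y A. (\<Sum>i<n. y i) = xs \<and> partition_n M n A \<and>
              (\<forall>i<n. upper_prob (P i) ({\<omega>\<in>space M. X \<omega> > xs} \<inter> A i) \<le> L i (y i)))
       \<and> (\<forall>y A. (\<Sum>i<n. y i) = xs \<and> partition_n M n A \<and>
              (\<forall>i<n. upper_prob (P i) ({\<omega>\<in>space M. X \<omega> > xs} \<inter> A i) \<le> L i (y i)) \<longrightarrow>
            (let Xs = (\<lambda>i \<omega>. (X \<omega> - xs) * indicator (A i) \<omega> + y i) in
               (\<forall>i<n. Xs i \<in> XX) \<and> (\<forall>\<omega>\<in>space M. (\<Sum>i<n. Xs i \<omega>) = X \<omega>)
               \<and> (\<Sum>i<n. \<rho> i (Xs i)) = inf_conv M XX n \<rho> X)))"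
proof -
  interpret capacity_LVaR M XX n L "\<lambda>i. upper_prob (P i)"
    using XX n L cont by unfold_locales (auto simp: continuous_capacity_def)
  have \<rho>_lvar: "\<rho> i X = lvar i X" if "i < n" "X \<in> XX" for i X
    unfolding \<rho>_def using that P_ne P_prob L rv_space_measurable[OF XX]
    by (simp add: SUP_LVaR_eq_LVaR_upper_prob HI_def)
  have conv: "inf_conv M XX n \<rho> = inf_conv M XX n lvar"
    using \<rho>_lvar by (rule inf_conv_cong)
  have R: "R = A_risk"
    unfolding R_def A_risk_def ..
  have optimal: "(\<forall>i<n. Xs i \<in> XX) \<and> (\<forall>\<omega>\<in>space M. (\<Sum>i<n. Xs i \<omega>) = X \<omega>)
      \<and> (\<Sum>i<n. \<rho> i (Xs i)) = inf_conv M XX n lvar X"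
    if "X \<in> XX" "A_risk X = ereal x" "(\<Sum>i<n. y i) = x" "partition_n M n B"
      "\<forall>i<n. upper_prob (P i) ({\<omega>\<in>space M. X \<omega> > x} \<inter> B i) \<le> L i (y i)"
      "Xs = (\<lambda>i \<omega>. (X \<omega> - x) * indicator (B i) \<omega> + y i)" for X x y B Xs
    using optimal_allocation[OF that] \<rho>_lvar by simp
  show ?thesis
    unfolding conv R Let_def
    using inf_conv_eq_A_risk A_risk_is_LVaR A_set_partition optimal by blast
qed

end
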